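(* Let $G$ be a connected graph with $n$ nodes and fix $t\ge 0$. Then there exists an index $i\in\{1,\dots,n\}$ such that, writing $e_i$ for the $i$-th standard basis vector, $$\mathbb E\|v(t)-\bar v\|_1\ \text{ for } v(0)=e_i \;\ge\; \mathbb E\|v(t)-\bar v\|_1\ \text{ for } v(0)=w$$ for every $w\in\mathbb R^n$ with $\|w\|_1=1$. That is, the maximum of $\mathbb E\|v(t)-\bar v\|_1$ over all initial vectors of unit $L^1$ norm is attained at some $e_i$.
   Context: Let $G=(V,E)$ be a finite, undirected, connected graph with $V=\{1,\dots,n\}$. The averaging process on $G$: the state vector $v(t)\in\mathbb R^n$, $t=0,1,2,\dots$, starts from a given $v(0)$; at each step $t\ge 1$ an edge $\{i,j\}\in E$ is chosen uniformly at random (independently of all previous choices) and both $v_i$ and $v_j$ are replaced by $(v_i+v_j)/2$, all other coordinates unchanged. Let $\bar v=(a,\dots,a)^T$ with $a=\frac1n\sum_i v_i(0)$ (so $\bar v$ depends on the initial vector). *)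

theory Defs
  imports Complex_Main
begin

(* Vertices are 0..<n (0-based version of {1..n}); vectors in R^n are
   functions nat => real, only the coordinates k < n matter. *)

definition graph_on :: "nat \<Rightarrow> nat set set \<Rightarrow> bool" where
  "graph_on n E \<longleftrightarrow> (\<forall>e\<in>E. \<exists>i j. i < n \<and> j < n \<and> i \<noteq> j \<and> e = {i, j})"

definition adj_rel :: "nat set set \<Rightarrow> (nat \<times> nat) set" where
  "adj_rel E = {(i, j). {i, j} \<in> E}"

definition connected_graph :: "nat \<Rightarrow> nat set set \<Rightarrow> bool" where
  "connected_graph n E \<longleftrightarrow> graph_on n E \<and>
     (\<forall>i<n. \<forall>j<n. (i, j) \<in> (adj_rel E)\<^sup>*)"

definition avg_step :: "nat set \<Rightarrow> (nat \<Rightarrow> real) \<Rightarrow> (nat \<Rightarrow> real)" where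
  "avg_step e v = (\<lambda>k. if k \<in> e then (\<Sum>l\<in>e. v l) / 2 else v k)"

fun run_process :: "nat set list \<Rightarrow> (nat \<Rightarrow> real) \<Rightarrow> (nat \<Rightarrow> real)" where
  "run_process [] v = v"
| "run_process (e # es) v = run_process es (avg_step e v)"

definition l1norm :: "nat \<Rightarrow> (nat \<Rightarrow> real) \<Rightarrow> real" where
  "l1norm n v = (\<Sum>k<n. \<bar>v k\<bar>)"

definition mean_vec :: "nat \<Rightarrow> (nat \<Rightarrow> real) \<Rightarrow> (nat \<Rightarrow> real)" where
  "mean_vec n v = (\<lambda>k. (\<Sum>l<n. v l) / real n)"

(* E || v(t) - vbar ||_1 : edges chosen i.i.d. uniformly from E, so every
   sequence of t edges has probability 1 / |E|^t *)
definition expected_dev :: "nat \<Rightarrow> nat set set \<Rightarrow> nat \<Rightarrow> (nat \<Rightarrow> real) \<Rightarrow> real" where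
  "expected_dev n E t v0 =
     (\<Sum>es\<in>{es. length es = t \<and> set es \<subseteq> E}.
        l1norm n (\<lambda>k. run_process es v0 k - mean_vec n v0 k)) / real (card E) ^ t"

definition std_basis :: "nat \<Rightarrow> (nat \<Rightarrow> real)" where
  "std_basis i = (\<lambda>k. if k = i then 1 else 0)"

end

theory Submission
  imports Defs
begin

text \<open>Along a fixed sequence of edges, the deviation v(t) - vbar from consensus depends linearly
  on v(0) = w, and only on the coordinates w_0, ..., w_(n-1). Writing w = sum_j w_j e_j, the
  triangle inequality gives E|v(t) - vbar|_1 <= sum_j |w_j| F(e_j), where F(e_j) is the expected
  deviation started from e_j. For |w|_1 = 1 the right-hand side is a convex combination of the
  F(e_j), hence at most their maximum.\<close>

lemma avg_step_sum:
  "avg_step e (\<lambda>k. \<Sum>j\<in>J. c j * u j k) = (\<lambda>k. \<Sum>j\<in>J. c j * avg_step e (u j) k)"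
  unfolding avg_step_def
  by (auto simp: sum.swap[of _ e] sum_distrib_left sum_divide_distrib)

lemma run_process_sum:
  "run_process es (\<lambda>k. \<Sum>j\<in>J. c j * u j k) = (\<lambda>k. \<Sum>j\<in>J. c j * run_process es (u j) k)"
proof (induction es arbitrary: u)
  case Nil
  then show ?case by simp
next
  case (Cons e es)
  then show ?case
    using Cons.IH[of "\<lambda>j. avg_step e (u j)"] by (simp add: avg_step_sum)
qed

lemma avg_step_cong_below:
  assumes "e \<subseteq> {..<n}" "\<And>k. k < n \<Longrightarrow> v k = v' k" "k < n"
  shows "avg_step e v k = avg_step e v' k"
proof -
  have "(\<Sum>l\<in>e. v l) = (\<Sum>l\<in>e. v' l)"
    using assms(1,2) by (intro sum.cong) auto
  then show ?thesis
    unfolding avg_step_def using assms by auto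
qed

lemma run_process_cong_below:
  assumes "\<forall>e\<in>set es. e \<subseteq> {..<n}" "\<And>k. k < n \<Longrightarrow> v k = v' k" "k < n"
  shows "run_process es v k = run_process es v' k"
  using assms
proof (induction es arbitrary: v v')
  case Nil
  then show ?case by simp
next
  case (Cons e es)
  have "run_process es (avg_step e v) k = run_process es (avg_step e v') k"
  proof (rule Cons.IH)
    show "\<forall>e\<in>set es. e \<subseteq> {..<n}"
      using Cons.prems(1) by simp
    show "avg_step e v j = avg_step e v' j" if "j < n" for j
      using Cons.prems that by (intro avg_step_cong_below) auto
  qed (use Cons.prems(3) in simp)
  then show ?case
    by simp
qed

lemma graph_on_edge_subset:
  assumes "graph_on n E" "e \<in> E"
  shows "e \<subseteq> {..<n}"
  using assms unfolding graph_on_def by auto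

lemma sum_std_basis_expansion:
  assumes "k < n"
  shows "(\<Sum>j<n. w j * std_basis j k) = w k"
  using assms by (simp add: std_basis_def if_distrib cong: if_cong)

lemma mean_vec_std_basis:
  "j < n \<Longrightarrow> mean_vec n (std_basis j) k = 1 / real n"
  by (simp add: mean_vec_def std_basis_def)

lemma mean_vec_std_basis_expansion:
  "mean_vec n w k = (\<Sum>j<n. w j * mean_vec n (std_basis j) k)"
proof -
  have "(\<Sum>j<n. w j * mean_vec n (std_basis j) k) = (\<Sum>j<n. w j * (1 / real n))"
    by (intro sum.cong) (simp_all add: mean_vec_std_basis)
  then show ?thesis
    by (simp add: mean_vec_def sum_divide_distrib)
qed

lemma deviation_std_basis_expansion:
  assumes "\<forall>e\<in>set es. e \<subseteq> {..<n}" "k < n"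
  shows "run_process es w k - mean_vec n w k
    = (\<Sum>j<n. w j * (run_process es (std_basis j) k - mean_vec n (std_basis j) k))"
proof -
  have "run_process es w k = run_process es (\<lambda>k. \<Sum>j<n. w j * std_basis j k) k"
    using assms by (intro run_process_cong_below[of es n]) (simp_all add: sum_std_basis_expansion)
  also have "\<dots> = (\<Sum>j<n. w j * run_process es (std_basis j) k)"
    by (simp add: run_process_sum)
  finally show ?thesis
    by (subst mean_vec_std_basis_expansion) (simp add: sum_subtractf right_diff_distrib)
qed

lemma l1norm_sum_le:
  "l1norm n (\<lambda>k. \<Sum>j\<in>J. c j * u j k) \<le> (\<Sum>j\<in>J. \<bar>c j\<bar> * l1norm n (u j))"
proof -
  have "l1norm n (\<lambda>k. \<Sum>j\<in>J. c j * u j k) \<le> (\<Sum>k<n. \<Sum>j\<in>J. \<bar>c j\<bar> * \<bar>u j k\<bar>)"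
    unfolding l1norm_def by (intro sum_mono order.trans[OF sum_abs]) (simp add: abs_mult)
  also have "\<dots> = (\<Sum>j\<in>J. \<bar>c j\<bar> * l1norm n (u j))"
    unfolding l1norm_def by (subst sum.swap) (simp add: sum_distrib_left)
  finally show ?thesis .
qed

lemma expected_dev_le_std_basis_combination:
  assumes "graph_on n E"
  shows "expected_dev n E t w \<le> (\<Sum>j<n. \<bar>w j\<bar> * expected_dev n E t (std_basis j))"
proof -
  define ES where "ES = {es. length es = t \<and> set es \<subseteq> E}"
  define dev where "dev es v = (\<lambda>k. run_process es v k - mean_vec n v k)" for es v
  define S where "S j = (\<Sum>es\<in>ES. l1norm n (dev es (std_basis j)))" for j
  have expected_dev_eq: "expected_dev n E t v = (\<Sum>es\<in>ES. l1norm n (dev es v)) / real (card E) ^ t"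
    for v
    by (simp add: expected_dev_def ES_def dev_def)
  have run_bound: "l1norm n (dev es w) \<le> (\<Sum>j<n. \<bar>w j\<bar> * l1norm n (dev es (std_basis j)))"
    if "es \<in> ES" for es
  proof -
    have "\<forall>e\<in>set es. e \<subseteq> {..<n}"
      using that graph_on_edge_subset[OF assms] unfolding ES_def by auto
    then have "l1norm n (dev es w) = l1norm n (\<lambda>k. \<Sum>j<n. w j * dev es (std_basis j) k)"
      unfolding l1norm_def dev_def by (intro sum.cong refl) (simp add: deviation_std_basis_expansion)
    then show ?thesis
      using l1norm_sum_le by simp
  qed
  have "(\<Sum>es\<in>ES. l1norm n (dev es w))
      \<le> (\<Sum>es\<in>ES. \<Sum>j<n. \<bar>w j\<bar> * l1norm n (dev es (std_basis j)))"
    using run_bound by (rule sum_mono)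
  also have "\<dots> = (\<Sum>j<n. \<bar>w j\<bar> * S j)"
    unfolding S_def by (subst sum.swap) (simp add: sum_distrib_left)
  finally have "expected_dev n E t w \<le> (\<Sum>j<n. \<bar>w j\<bar> * S j) / real (card E) ^ t"
    unfolding expected_dev_eq by (simp add: divide_right_mono)
  also have "\<dots> = (\<Sum>j<n. \<bar>w j\<bar> * (S j / real (card E) ^ t))"
    by (simp add: sum_divide_distrib)
  also have "\<dots> = (\<Sum>j<n. \<bar>w j\<bar> * expected_dev n E t (std_basis j))"
    by (simp add: expected_dev_eq S_def)
  finally show ?thesis .
qed

theorem theorem2:
  fixes n :: nat and E :: "nat set set" and t :: nat
  assumes "n \<ge> 1"
    and "connected_graph n E"
  shows "\<exists>i<n. \<forall>w :: nat \<Rightarrow> real. l1norm n w = 1 \<longrightarrow>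
           expected_dev n E t w \<le> expected_dev n E t (std_basis i)"
proof -
  let ?f = "\<lambda>j. expected_dev n E t (std_basis j)"
  have "Max (?f ` {..<n}) \<in> ?f ` {..<n}"
    using assms(1) by (intro Max_in) (auto simp: lessThan_empty_iff)
  then obtain i where "i < n" and i_Max: "?f i = Max (?f ` {..<n})"
    by auto
  have i_max: "?f j \<le> ?f i" if "j < n" for j
    unfolding i_Max using that by (intro Max_ge) auto
  have "expected_dev n E t w \<le> ?f i" if "l1norm n w = 1" for w
  proof -
    have "expected_dev n E t w \<le> (\<Sum>j<n. \<bar>w j\<bar> * ?f j)"
      using assms(2) unfolding connected_graph_def
      by (intro expected_dev_le_std_basis_combination) simp
    also have "\<dots> \<le> (\<Sum>j<n. \<bar>w j\<bar> * ?f i)"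
      by (intro sum_mono mult_left_mono i_max) auto
    also have "\<dots> = l1norm n w * ?f i"
      by (simp add: l1norm_def sum_distrib_right)
    also have "\<dots> = ?f i"
      using that by simp
    finally show ?thesis .
  qed
  then show ?thesis
    using \<open>i < n\<close> by blast
qed

end
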